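(* Let $(\Omega,\mathcal{F},P)$ be a probability space and $X$ a scalar random variable with distribution $\pi$ and upper bound $\ell\in\mathbb{R}$ with $\mathbb{P}_\pi[X\le \ell]=1$. Let $g$ be a closed convex function with $g(1)=0$, let $\beta\ge 0$, and let $\mathrm{ER}_{g,\beta}$ be the $g$-entropic risk measure with divergence level $\beta$. Suppose the convex conjugate $g^*$ of $g$ is real-valued, $g^*:\mathbb{R}\to\mathbb{R}$. Define $L(x,\mu,t) = t\left(\mu + g^*\left(\frac{x}{t}-\mu+\beta\right)\right)$ and suppose $u_b: D\subset\mathbb{R}^2\to\mathbb{R}$ is a function with $\mathbb{P}_{\pi}[L(X,\mu,t)\le u_b(\mu,t)] = 1$ for all $\mu\in\mathbb{R}$, $t>0$. For $N$ independent samples $x_1,\dots,x_N$ of $X$, let $\zeta^*_N(\mu,t)=\max_{1\le k\le N} L(x_k,\mu,t)$ (the solution of $\min_\zeta \zeta$ s.t. $\zeta\ge L(x_i,\mu,t)$ for all $i$). Then for all $\epsilon\in[0,1]$, \[ \mathbb{P}^N_{\pi}\left[\mathrm{ER}_{g,\beta}(X) \le \inf_{t>0,\ \mu\in\mathbb{R}} \zeta^*_N(\mu,t)(1-\epsilon) + u_b(\mu,t)\epsilon\right] \ge 1-(1-\epsilon)^N. \]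
   Context: The $g$-entropic risk measure with divergence level $\beta$ is $\mathrm{ER}_{g,\beta}(X) = \sup_{Q\in\mathcal{P}} \mathbb{E}_Q[X]$, where $\mathcal{P} = \{Q : Q \ll P,\ \int g(\frac{dQ}{dP})\,dP \le \beta\}$, $Q\ll P$ denotes absolute continuity and $\frac{dQ}{dP}$ the Radon–Nikodym derivative. The convex conjugate is $g^*(y)=\sup_x(xy-g(x))$. $\mathbb{P}^N_{\pi}$ is the $N$-fold product measure governing the i.i.d. sample. *)

theory Defs
  imports "HOL-Probability.Probability"
begin

definition epigraph :: "(real \<Rightarrow> ereal) \<Rightarrow> (real \<times> real) set" where
  "epigraph g = {(x, r). g x \<le> ereal r}"

definition closed_convex_fun :: "(real \<Rightarrow> ereal) \<Rightarrow> bool" where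
  "closed_convex_fun g \<longleftrightarrow> convex (epigraph g) \<and> closed (epigraph g) \<and> (\<forall>x. g x \<noteq> -\<infinity>)"

definition conj_fun :: "(real \<Rightarrow> ereal) \<Rightarrow> real \<Rightarrow> ereal" where
  "conj_fun g y = (SUP x. ereal (x * y) - g x)"

definition ext_integral :: "'a measure \<Rightarrow> ('a \<Rightarrow> ereal) \<Rightarrow> ereal" where
  "ext_integral M h = enn2ereal (\<integral>\<^sup>+ w. e2ennreal (h w) \<partial>M) - enn2ereal (\<integral>\<^sup>+ w. e2ennreal (- h w) \<partial>M)"

definition g_div :: "(real \<Rightarrow> ereal) \<Rightarrow> 'a measure \<Rightarrow> 'a measure \<Rightarrow> ereal" where
  "g_div g P Q = ext_integral P (\<lambda>w. g (enn2real (RN_deriv P Q w)))"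

definition ambiguity_set :: "(real \<Rightarrow> ereal) \<Rightarrow> real \<Rightarrow> 'a measure \<Rightarrow> 'a measure set" where
  "ambiguity_set g \<beta> P = {Q. sets Q = sets P \<and> prob_space Q \<and> absolutely_continuous P Q \<and> g_div g P Q \<le> ereal \<beta>}"

definition entropic_risk :: "(real \<Rightarrow> ereal) \<Rightarrow> real \<Rightarrow> 'a measure \<Rightarrow> ('a \<Rightarrow> real) \<Rightarrow> ereal" where
  "entropic_risk g \<beta> P X = (SUP Q \<in> ambiguity_set g \<beta> P. ext_integral Q (\<lambda>w. ereal (X w)))"

definition Lfun :: "(real \<Rightarrow> ereal) \<Rightarrow> real \<Rightarrow> real \<Rightarrow> real \<Rightarrow> real \<Rightarrow> real" where
  "Lfun g \<beta> x \<mu> t = t * (\<mu> + real_of_ereal (conj_fun g (x / t - \<mu> + \<beta>)))"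

end

theory Submission
  imports Defs
begin

(* If Q lies in the ambiguity set and Z = dQ/dP, Fenchel-Young for g gives pointwise
     Z y <= L(y, mu, t) + t (g(Z) - beta Z) + t mu (Z - 1),
   so integrating (E Z = 1, E g(Z) <= beta) yields E_Q[X] <= E_P[R] for every R that dominates
   L(Y, mu, t) for some Y >= X.  With Y = s on {X <= s} and Y = X elsewhere this bounds ER(X) by
   p L(s) + (1 - p) u_b, where p = P[X <= s]; if p >= 1 - eps this is at most
   (1 - eps) L(s) + eps u_b (when L(s) > u_b, use the empty set instead of {X <= s}).
   A sample falls strictly below the (1 - eps)-quantile with probability at most 1 - eps, so with
   probability at least 1 - (1 - eps)^N some sample x_k satisfies P[X <= x_k] >= 1 - eps, and the
   sample maximum dominates L(x_k). *)

lemma conj_fun_fenchel_young: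
  assumes "\<bar>conj_fun g y\<bar> \<noteq> \<infinity>" and "g x = ereal r"
  shows "x * y - r \<le> real_of_ereal (conj_fun g y)"
proof -
  have "ereal (x * y) - g x \<le> conj_fun g y"
    unfolding conj_fun_def by (rule SUP_upper) simp
  then show ?thesis
    using assms by (cases "conj_fun g y") auto
qed

lemma neg_conj_fun_zero_le:
  assumes "\<bar>conj_fun g 0\<bar> \<noteq> \<infinity>" and "g x \<noteq> -\<infinity>"
  shows "ereal (- real_of_ereal (conj_fun g 0)) \<le> g x"
proof (cases "g x")
  case (real r)
  with conj_fun_fenchel_young[OF assms(1) real] show ?thesis by simp
qed (use assms(2) in auto)

lemma Lfun_fenchel_young:
  assumes "\<forall>y. \<bar>conj_fun g y\<bar> \<noteq> \<infinity>" and "g z = ereal r" and "0 < t"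
  shows "z * x \<le> Lfun g \<beta> x \<mu> t + t * (r - \<beta> * z) + t * \<mu> * (z - 1)"
proof -
  let ?y = "x / t - \<mu> + \<beta>"
  have "t * (z * ?y - r) \<le> t * real_of_ereal (conj_fun g ?y)"
    using conj_fun_fenchel_young[OF assms(1)[rule_format] assms(2)] assms(3) by simp
  moreover have "t * (z * ?y - r) = z * x - t * \<mu> * z + t * \<beta> * z - t * r"
    using assms(3) by (simp add: field_simps)
  ultimately show ?thesis
    by (simp add: Lfun_def algebra_simps)
qed

lemma convex_on_conj_fun:
  assumes "\<forall>y. \<bar>conj_fun g y\<bar> \<noteq> \<infinity>" and "\<forall>x. g x \<noteq> -\<infinity>"
  shows "convex_on UNIV (\<lambda>y. real_of_ereal (conj_fun g y))"
proof (rule convex_onI)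
  fix a y1 y2 :: real
  assume a: "0 < a" "a < 1"
  let ?C = "\<lambda>y. real_of_ereal (conj_fun g y)"
  let ?y = "(1 - a) *\<^sub>R y1 + a *\<^sub>R y2"
  have "conj_fun g ?y \<le> ereal ((1 - a) * ?C y1 + a * ?C y2)"
    unfolding conj_fun_def[of g ?y]
  proof (rule SUP_least)
    fix x
    show "ereal (x * ?y) - g x \<le> ereal ((1 - a) * ?C y1 + a * ?C y2)"
    proof (cases "g x")
      case (real r)
      have "x * ?y - r = (1 - a) * (x * y1 - r) + a * (x * y2 - r)"
        by (simp add: algebra_simps)
      also have "\<dots> \<le> (1 - a) * ?C y1 + a * ?C y2"
        using conj_fun_fenchel_young[OF assms(1)[rule_format] real] a
        by (intro add_mono mult_left_mono) auto
      finally show ?thesis using real by simp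
    qed (use assms(2) in auto)
  qed
  then show "?C ?y \<le> (1 - a) * ?C y1 + a * ?C y2"
    using assms(1)[rule_format, of ?y] by (cases "conj_fun g ?y") auto
qed simp

lemma continuous_on_Lfun:
  assumes "\<forall>y. \<bar>conj_fun g y\<bar> \<noteq> \<infinity>" and "\<forall>x. g x \<noteq> -\<infinity>" and "t \<noteq> 0"
  shows "continuous_on UNIV (\<lambda>x. Lfun g \<beta> x \<mu> t)"
proof -
  have "continuous_on UNIV (\<lambda>y. real_of_ereal (conj_fun g y))"
    by (rule convex_on_continuous[OF open_UNIV convex_on_conj_fun[OF assms(1,2)]])
  then have "continuous_on UNIV (\<lambda>x. real_of_ereal (conj_fun g (x / t - \<mu> + \<beta>)))"
    by (rule continuous_on_compose2[OF _ _ subset_UNIV])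
       (use assms(3) in \<open>auto intro!: continuous_intros\<close>)
  then show ?thesis
    unfolding Lfun_def by (intro continuous_intros)
qed

lemma borel_measurable_closed_convex_fun:
  assumes "closed_convex_fun g"
  shows "g \<in> borel_measurable borel"
proof (rule borel_measurableI_le)
  fix y :: ereal
  show "{x \<in> space borel. g x \<le> y} \<in> sets borel"
  proof (cases y)
    case (real r)
    have "closed ((\<lambda>x. (x, r)) -` epigraph g)"
      using assms unfolding closed_convex_fun_def
      by (intro closed_vimage continuous_intros) auto
    moreover have "{x \<in> space borel. g x \<le> y} = (\<lambda>x. (x, r)) -` epigraph g"
      using real by (auto simp: epigraph_def)
    ultimately show ?thesis by simp
  next
    case MInf
    then have "{x \<in> space borel. g x \<le> y} = {}"
      using assms unfolding closed_convex_fun_def by auto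
    then show ?thesis by simp
  qed simp
qed

lemma enn2ereal_eq_ereal_enn2real: "x \<noteq> \<infinity> \<Longrightarrow> enn2ereal x = ereal (enn2real x)"
  by (cases x) (auto simp: enn2real_def)

lemma ext_integral_ereal:
  fixes f :: "'a \<Rightarrow> real"
  assumes "f \<in> borel_measurable M" and "(\<integral>\<^sup>+ x. ennreal (f x) \<partial>M) \<noteq> \<infinity>"
  shows "ext_integral M (\<lambda>w. ereal (f w))
    = (if integrable M f then ereal (integral\<^sup>L M f) else -\<infinity>)"
proof (cases "integrable M f")
  case True
  then have "(\<integral>\<^sup>+ x. ennreal (- f x) \<partial>M) \<noteq> \<infinity>"
    using real_integrable_def by blast
  with True assms show ?thesis
    by (simp add: ext_integral_def real_lebesgue_integral_def enn2ereal_eq_ereal_enn2real)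
next
  case False
  then have "(\<integral>\<^sup>+ x. ennreal (- f x) \<partial>M) = \<infinity>"
    using real_integrable_def assms by blast
  with False assms show ?thesis
    by (simp add: ext_integral_def enn2ereal_eq_ereal_enn2real)
qed

lemma ext_integral_ereal_bounded_above:
  fixes f :: "'a \<Rightarrow> real"
  assumes "finite_measure M" and "f \<in> borel_measurable M" and "AE w in M. f w \<le> c"
  shows "ext_integral M (\<lambda>w. ereal (f w))
    = (if integrable M f then ereal (integral\<^sup>L M f) else -\<infinity>)"
proof (rule ext_integral_ereal[OF assms(2)])
  interpret finite_measure M by fact
  have "(\<integral>\<^sup>+ w. ennreal (f w) \<partial>M) \<le> (\<integral>\<^sup>+ w. ennreal c \<partial>M)"
    using assms(3) by (intro nn_integral_mono_AE) (auto elim!: eventually_mono intro: ennreal_leI)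
  also have "\<dots> < \<infinity>"
    using emeasure_finite[of "space M"] by (simp add: ennreal_mult_eq_top_iff less_top[symmetric])
  finally show "(\<integral>\<^sup>+ w. ennreal (f w) \<partial>M) \<noteq> \<infinity>"
    by simp
qed

lemma ext_integral_bounded_below:
  fixes f :: "'a \<Rightarrow> ereal"
  assumes "finite_measure M" and [measurable]: "f \<in> borel_measurable M"
    and "\<And>w. ereal c \<le> f w" and "ext_integral M f \<noteq> \<infinity>"
  shows "integrable M (\<lambda>w. real_of_ereal (f w))"
    and "AE w in M. f w = ereal (real_of_ereal (f w))"
    and "ext_integral M f = ereal (\<integral>w. real_of_ereal (f w) \<partial>M)"
proof -
  interpret finite_measure M by fact
  let ?F = "\<lambda>w. real_of_ereal (f w)"
  have "(\<integral>\<^sup>+ w. e2ennreal (- f w) \<partial>M) \<le> (\<integral>\<^sup>+ w. ennreal (- c) \<partial>M)"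
  proof (rule nn_integral_mono)
    fix w
    have "- f w \<le> ereal (- c)"
      using assms(3)[of w] by (metis ereal_minus_le_minus uminus_ereal.simps(1))
    then show "e2ennreal (- f w) \<le> ennreal (- c)"
      by (metis e2ennreal_mono e2ennreal_ereal)
  qed
  also have "\<dots> < \<infinity>"
    using emeasure_finite[of "space M"] by (simp add: ennreal_mult_eq_top_iff less_top[symmetric])
  finally have neg: "(\<integral>\<^sup>+ w. e2ennreal (- f w) \<partial>M) \<noteq> \<infinity>" by simp
  have pos: "(\<integral>\<^sup>+ w. e2ennreal (f w) \<partial>M) \<noteq> \<infinity>"
  proof
    assume "(\<integral>\<^sup>+ w. e2ennreal (f w) \<partial>M) = \<infinity>"
    with neg have "ext_integral M f = \<infinity>"
      by (simp add: ext_integral_def enn2ereal_eq_ereal_enn2real)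
    with assms(4) show False ..
  qed
  have "AE w in M. e2ennreal (f w) \<noteq> \<infinity>"
    by (rule nn_integral_PInf_AE[OF _ pos]) measurable
  then show fin: "AE w in M. f w = ereal (?F w)"
  proof eventually_elim
    case (elim w)
    then show ?case
      using assms(3)[of w] by (cases "f w") auto
  qed
  have pos': "(\<integral>\<^sup>+ w. ennreal (?F w) \<partial>M) = (\<integral>\<^sup>+ w. e2ennreal (f w) \<partial>M)"
    by (rule nn_integral_cong_AE) (use fin in \<open>eventually_elim, metis e2ennreal_ereal\<close>)
  have neg': "(\<integral>\<^sup>+ w. ennreal (- ?F w) \<partial>M) = (\<integral>\<^sup>+ w. e2ennreal (- f w) \<partial>M)"
    by (rule nn_integral_cong_AE)
       (use fin in \<open>eventually_elim, metis e2ennreal_ereal uminus_ereal.simps(1)\<close>)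
  show int: "integrable M ?F"
    using pos neg pos' neg' by (simp add: real_integrable_def)
  have "ext_integral M f = ext_integral M (\<lambda>w. ereal (?F w))"
    unfolding ext_integral_def
    by (intro arg_cong2[where f="(-)"] arg_cong[where f=enn2ereal] nn_integral_cong_AE)
       (use fin in \<open>eventually_elim, metis\<close>)+
  also have "\<dots> = ereal (integral\<^sup>L M ?F)"
    using ext_integral_ereal[of ?F M] int pos pos' by simp
  finally show "ext_integral M f = ereal (integral\<^sup>L M ?F)" .
qed

lemma ambiguity_set_densityE:
  assumes "prob_space P" and "Q \<in> ambiguity_set g \<beta> P"
  obtains Z where "Z \<in> borel_measurable P" and "\<And>w. 0 \<le> Z w"
    and "Q = density P (\<lambda>w. ennreal (Z w))"
    and "integrable P Z" and "integral\<^sup>L P Z = 1"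
    and "ext_integral P (\<lambda>w. g (Z w)) \<le> ereal \<beta>"
proof -
  interpret prob_space P by fact
  have sQ: "sets Q = sets P" and pQ: "prob_space Q" and ac: "absolutely_continuous P Q"
    and div: "g_div g P Q \<le> ereal \<beta>"
    using assms(2) by (auto simp: ambiguity_set_def)
  define Z where "Z w = enn2real (RN_deriv P Q w)" for w
  have Zm: "Z \<in> borel_measurable P" and Z0: "\<And>w. 0 \<le> Z w"
    unfolding Z_def by simp_all
  have "AE w in P. RN_deriv P Q w \<noteq> \<infinity>"
    by (rule RN_deriv_finite[OF prob_space_imp_sigma_finite[OF pQ] ac sQ])
  then have "density P (RN_deriv P Q) = density P (\<lambda>w. ennreal (Z w))"
    by (intro density_cong) (auto simp: Z_def less_top[symmetric])
  then have QZ: "Q = density P (\<lambda>w. ennreal (Z w))"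
    using density_RN_deriv[OF ac sQ] by simp
  have "(\<integral>\<^sup>+ w. ennreal (Z w) \<partial>P) = emeasure Q (space P)"
    unfolding QZ using Zm by (simp add: emeasure_density)
  also have "\<dots> = 1"
    using prob_space.emeasure_space_1[OF pQ] sets_eq_imp_space_eq[OF sQ] by simp
  finally have Z1: "(\<integral>\<^sup>+ w. ennreal (Z w) \<partial>P) = 1" .
  then have Zint: "integrable P Z"
    using Zm Z0 by (auto simp: real_integrable_def ennreal_neg)
  moreover have "integral\<^sup>L P Z = 1"
    using nn_integral_eq_integral[OF Zint] Z0 Z1 by simp
  moreover have "ext_integral P (\<lambda>w. g (Z w)) \<le> ereal \<beta>"
    using div by (simp add: g_div_def Z_def)
  ultimately show ?thesis
    using that Zm Z0 QZ by blast
qed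

lemma divergence_integrableE:
  assumes "prob_space P" and "closed_convex_fun g" and "\<forall>y. \<bar>conj_fun g y\<bar> \<noteq> \<infinity>"
    and "Z \<in> borel_measurable P" and "ext_integral P (\<lambda>w. g (Z w)) \<le> ereal \<beta>"
  obtains G where "integrable P G" and "AE w in P. g (Z w) = ereal (G w)"
    and "integral\<^sup>L P G \<le> \<beta>"
proof -
  interpret prob_space P by fact
  note [measurable] = assms(4) borel_measurable_closed_convex_fun[OF assms(2)]
  have meas: "(\<lambda>w. g (Z w)) \<in> borel_measurable P"
    by measurable
  have lower: "ereal (- real_of_ereal (conj_fun g 0)) \<le> g x" for x
    using assms(2,3) by (intro neg_conj_fun_zero_le) (auto simp: closed_convex_fun_def)
  have "ext_integral P (\<lambda>w. g (Z w)) \<noteq> \<infinity>"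
    using assms(5) by auto
  note G = ext_integral_bounded_below[OF finite_measure_axioms meas lower this]
  show ?thesis
  proof (rule that)
    show "integral\<^sup>L P (\<lambda>w. real_of_ereal (g (Z w))) \<le> \<beta>"
      using G(3) assms(5) by simp
  qed (fact G(1,2))+
qed

lemma integral_density_le_Lfun_majorant:
  fixes Z G X Y R :: "'a \<Rightarrow> real"
  assumes "prob_space P" and "\<forall>y. \<bar>conj_fun g y\<bar> \<noteq> \<infinity>" and "0 < t"
    and "\<And>w. 0 \<le> Z w" and "integrable P Z" and "integral\<^sup>L P Z = 1"
    and "integrable P G" and "AE w in P. g (Z w) = ereal (G w)" and "integral\<^sup>L P G \<le> \<beta>"
    and "integrable P (\<lambda>w. Z w * X w)" and "integrable P R"
    and "\<And>w. X w \<le> Y w" and "AE w in P. Lfun g \<beta> (Y w) \<mu> t \<le> R w"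
  shows "(\<integral>w. Z w * X w \<partial>P) \<le> integral\<^sup>L P R"
proof -
  interpret prob_space P by fact
  let ?B = "\<lambda>w. R w + t * (G w - \<beta> * Z w) + t * \<mu> * (Z w - 1)"
  have "AE w in P. Z w * X w \<le> ?B w"
    using assms(8,13)
  proof eventually_elim
    case (elim w)
    have "Z w * X w \<le> Z w * Y w"
      by (rule mult_left_mono[OF assms(12,4)])
    also have "\<dots> \<le> Lfun g \<beta> (Y w) \<mu> t + t * (G w - \<beta> * Z w) + t * \<mu> * (Z w - 1)"
      by (rule Lfun_fenchel_young[OF assms(2) elim(1) assms(3)])
    also have "\<dots> \<le> ?B w"
      using elim(2) by simp
    finally show ?case .
  qed
  then have "(\<integral>w. Z w * X w \<partial>P) \<le> integral\<^sup>L P ?B"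
    using assms(5,7,10,11) by (intro integral_mono_AE) auto
  also have "\<dots> = integral\<^sup>L P R + t * (integral\<^sup>L P G - \<beta>)"
    using assms(5,6,7,11) by (simp add: prob_space algebra_simps)
  also have "\<dots> \<le> integral\<^sup>L P R"
    using assms(3,9) by (simp add: mult_le_0_iff)
  finally show ?thesis .
qed

lemma ext_integral_le_Lfun_mixture:
  assumes P: "prob_space P" and [measurable]: "X \<in> borel_measurable P"
    and ell: "AE w in P. X w \<le> ell"
    and g: "closed_convex_fun g" and conj: "\<forall>y. \<bar>conj_fun g y\<bar> \<noteq> \<infinity>"
    and Q: "Q \<in> ambiguity_set g \<beta> P"
    and t: "0 < t" and u: "AE w in P. Lfun g \<beta> (X w) \<mu> t \<le> u"
    and A[measurable]: "A \<in> sets P" and As: "\<forall>w\<in>A. X w \<le> s"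
  shows "ext_integral Q (\<lambda>w. ereal (X w))
    \<le> ereal (measure P A * Lfun g \<beta> s \<mu> t + (1 - measure P A) * u)"
proof -
  interpret prob_space P by fact
  obtain Z where Zm[measurable]: "Z \<in> borel_measurable P" and Z0: "\<And>w. 0 \<le> Z w"
    and QZ: "Q = density P (\<lambda>w. ennreal (Z w))" and Zint: "integrable P Z"
    and Z1: "integral\<^sup>L P Z = 1" and div: "ext_integral P (\<lambda>w. g (Z w)) \<le> ereal \<beta>"
    using ambiguity_set_densityE[OF P Q] by blast
  obtain G where G: "integrable P G" "AE w in P. g (Z w) = ereal (G w)"
    and Gle: "integral\<^sup>L P G \<le> \<beta>"
    using divergence_integrableE[OF P g conj Zm div] by blast
  have "prob_space Q"
    using Q by (simp add: ambiguity_set_def)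
  moreover have "AE w in Q. X w \<le> ell"
    unfolding QZ using ell by (subst AE_density) (auto elim: eventually_mono)
  ultimately have ext: "ext_integral Q (\<lambda>w. ereal (X w))
      = (if integrable Q X then ereal (integral\<^sup>L Q X) else -\<infinity>)"
    by (intro ext_integral_ereal_bounded_above) (auto simp: QZ prob_space.axioms(1))
  show ?thesis
  proof (cases "integrable Q X")
    case True
    let ?Ls = "Lfun g \<beta> s \<mu> t"
    have "integral\<^sup>L Q X = (\<integral>w. Z w * X w \<partial>P)"
      unfolding QZ by (simp add: integral_density Z0)
    also have "\<dots> \<le> (\<integral>w. u + (?Ls - u) * indicator A w \<partial>P)"
    proof (rule integral_density_le_Lfun_majorant[OF P conj t Z0 Zint Z1 G Gle])
      show "integrable P (\<lambda>w. Z w * X w)"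
        using True unfolding QZ by (simp add: integrable_density Z0)
      show "integrable P (\<lambda>w. u + (?Ls - u) * indicator A w)"
        by (simp add: emeasure_eq_measure)
      show "X w \<le> (if w \<in> A then s else X w)" for w
        using As by simp
      show "AE w in P. Lfun g \<beta> (if w \<in> A then s else X w) \<mu> t \<le> u + (?Ls - u) * indicator A w"
        using u by eventually_elim (simp add: indicator_def)
    qed
    also have "\<dots> = u + (?Ls - u) * measure P A"
      by (subst Bochner_Integration.integral_add) (auto simp: prob_space emeasure_eq_measure)
    also have "\<dots> = measure P A * ?Ls + (1 - measure P A) * u"
      by (simp add: algebra_simps)
    finally show ?thesis
      using True ext by simp
  qed (use ext in simp)
qed

lemma entropic_risk_le_Lfun_quantile:
  assumes "prob_space P" and "X \<in> borel_measurable P" and "AE w in P. X w \<le> ell"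
    and "closed_convex_fun g" and "\<forall>y. \<bar>conj_fun g y\<bar> \<noteq> \<infinity>"
    and "0 < t" and "AE w in P. Lfun g \<beta> (X w) \<mu> t \<le> u"
    and "\<epsilon> \<le> 1" and quantile: "1 - \<epsilon> \<le> measure P {w \<in> space P. X w \<le> s}"
  shows "entropic_risk g \<beta> P X \<le> ereal (Lfun g \<beta> s \<mu> t * (1 - \<epsilon>) + u * \<epsilon>)"
  unfolding entropic_risk_def
proof (rule SUP_least)
  fix Q
  assume Q: "Q \<in> ambiguity_set g \<beta> P"
  let ?Ls = "Lfun g \<beta> s \<mu> t"
  note mixture = ext_integral_le_Lfun_mixture[OF assms(1-5) Q assms(6,7)]
  show "ext_integral Q (\<lambda>w. ereal (X w)) \<le> ereal (?Ls * (1 - \<epsilon>) + u * \<epsilon>)"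
  proof (cases "?Ls \<le> u")
    case True
    let ?p = "measure P {w \<in> space P. X w \<le> s}"
    have "(1 - \<epsilon>) * (u - ?Ls) \<le> ?p * (u - ?Ls)"
      using quantile True by (intro mult_right_mono) auto
    then have "?p * ?Ls + (1 - ?p) * u \<le> ?Ls * (1 - \<epsilon>) + u * \<epsilon>"
      by (simp add: algebra_simps)
    moreover have "ext_integral Q (\<lambda>w. ereal (X w)) \<le> ereal (?p * ?Ls + (1 - ?p) * u)"
      using assms(2) by (intro mixture) auto
    ultimately show ?thesis
      by (meson ereal_less_eq(3) order_trans)
  next
    case False
    then have "(1 - \<epsilon>) * u \<le> (1 - \<epsilon>) * ?Ls"
      using assms(8) by (intro mult_left_mono) auto
    then have "u \<le> ?Ls * (1 - \<epsilon>) + u * \<epsilon>"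
      by (simp add: algebra_simps)
    moreover have "ext_integral Q (\<lambda>w. ereal (X w)) \<le> ereal u"
      using mixture[of "{}"] by simp
    ultimately show ?thesis
      by (meson ereal_less_eq(3) order_trans)
  qed
qed

lemma (in real_distribution) measure_lessThan_le_of_cdf_le:
  assumes "\<And>x. x < s \<Longrightarrow> cdf M x \<le> c"
  shows "measure M {..<s} \<le> c"
proof (rule tendsto_le[OF trivial_limit_at_left_real tendsto_const cdf_at_left])
  show "eventually (\<lambda>x. cdf M x \<le> c) (at_left s)"
    using eventually_at_left_real[of "s - 1" s] assms by (auto elim: eventually_mono)
qed

lemma (in real_distribution) measure_cdf_less_le:
  assumes "0 \<le> c"
  shows "measure M {x. cdf M x < c} \<le> c"
proof (cases "c < 1 \<and> {x. cdf M x < c} \<noteq> {}")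
  case True
  let ?B = "{x. cdf M x < c}"
  obtain n :: nat where n: "c < cdf M n"
    using order_tendstoD(1)[OF cdf_lim_infty_prob] True by (auto simp: eventually_sequentially)
  have "x < n" if "x \<in> ?B" for x
    using that n cdf_nondecreasing[of n x] by (auto simp: not_less[symmetric])
  then have bdd: "bdd_above ?B"
    by (meson bdd_aboveI less_imp_le)
  define s where "s = Sup ?B"
  have ub: "x \<le> s" if "x \<in> ?B" for x
    unfolding s_def using that bdd by (rule cSup_upper)
  have below: "x \<in> ?B" if "x < s" for x
  proof -
    obtain b where "b \<in> ?B" and "x < b"
      using \<open>x < s\<close> less_cSup_iff[OF _ bdd] True unfolding s_def by blast
    then show ?thesis
      using cdf_nondecreasing[of x b] by simp
  qed
  show ?thesis
  proof (cases "s \<in> ?B")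
    case True
    have "measure M ?B \<le> measure M {..s}"
      using ub by (intro finite_measure_mono) auto
    with True show ?thesis
      by (simp add: cdf_def2)
  next
    case False
    have "measure M ?B \<le> measure M {..<s}"
      using ub False by (intro finite_measure_mono) (auto simp: le_less)
    also have "\<dots> \<le> c"
      using below by (intro measure_lessThan_le_of_cdf_le) (simp add: less_imp_le)
    finally show ?thesis .
  qed
next
  case False
  then consider "1 \<le> c" | "{x. cdf M x < c} = {}"
    by fastforce
  then show ?thesis
    using assms prob_le_1[of "{x. cdf M x < c}"] by cases (linarith, simp)
qed

lemma prob_exists_sample_cdf_ge:
  assumes "real_distribution M" and "0 \<le> c"
  shows "1 - c ^ N \<le> measure (PiM {..<N} (\<lambda>_. M))
    {xs \<in> space (PiM {..<N} (\<lambda>_. M)). \<exists>k<N. c \<le> cdf M (xs k)}"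
proof -
  interpret real_distribution M by fact
  interpret PiM: finite_product_prob_space "\<lambda>_. M" "{..<N}"
    by unfold_locales simp
  let ?B = "{x. cdf M x < c}"
  have "cdf M \<in> borel_measurable borel"
    by (rule borel_measurable_mono) (simp add: mono_def cdf_nondecreasing)
  then have "{x \<in> space borel. cdf M x < c} \<in> sets borel"
    by measurable
  then have B: "?B \<in> sets M"
    by simp
  have "{xs \<in> space (PiM {..<N} (\<lambda>_. M)). \<exists>k<N. c \<le> cdf M (xs k)}
      = space (PiM {..<N} (\<lambda>_. M)) - PiE {..<N} (\<lambda>_. ?B)"
    by (auto simp: space_PiM PiE_def Pi_def not_less)
  moreover have "measure (PiM {..<N} (\<lambda>_. M)) (PiE {..<N} (\<lambda>_. ?B)) = measure M ?B ^ N"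
    using B by (simp add: PiM.finite_measure_PiM_emb)
  moreover have "measure M ?B ^ N \<le> c ^ N"
    using measure_cdf_less_le[OF assms(2)] by (intro power_mono) auto
  ultimately show ?thesis
    using B by (simp add: PiM.prob_compl sets_PiM_I_finite)
qed

lemma sets_PiM_Collect_closed:
  fixes Q :: "('i::countable \<Rightarrow> 'b::second_countable_topology) \<Rightarrow> bool"
  assumes "closed {xs. Q xs}" and "sets M = sets borel"
  shows "{xs \<in> space (PiM I (\<lambda>_. M)). Q xs} \<in> sets (PiM I (\<lambda>_. M))"
proof -
  have "(\<lambda>xs. xs) \<in> borel_measurable (PiM I (\<lambda>_. M))"
  proof (rule measurable_coordinatewise_then_product)
    fix i
    show "(\<lambda>xs. xs i) \<in> borel_measurable (PiM I (\<lambda>_. M))"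
    proof (cases "i \<in> I")
      case True
      then have "(\<lambda>xs. xs i) \<in> measurable (PiM I (\<lambda>_. M)) M"
        by (rule measurable_component_singleton)
      then show ?thesis
        using measurable_cong_sets[OF refl assms(2)] by blast
    next
      case False
      then have "xs i = undefined" if "xs \<in> space (PiM I (\<lambda>_. M))" for xs
        using that by (auto simp: space_PiM PiE_def extensional_def)
      then show ?thesis
        using measurable_cong[of "PiM I (\<lambda>_. M)" "\<lambda>xs. xs i" "\<lambda>_. undefined" borel] by simp
    qed
  qed
  from measurable_sets[OF this borel_closed[OF assms(1)]] show ?thesis
    by (simp add: Int_def conj_commute)
qed

lemma closed_Collect_le_INF_ereal:
  fixes f :: "'i \<Rightarrow> 'a::topological_space \<Rightarrow> real"
  assumes "\<And>p. p \<in> I \<Longrightarrow> continuous_on UNIV (f p)"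
  shows "closed {x. E \<le> (INF p\<in>I. ereal (f p x))}"
proof -
  have "closed {x. E \<le> ereal (f p x)}" if "p \<in> I" for p
  proof (cases E)
    case (real r)
    then show ?thesis
      using closed_Collect_le[OF continuous_on_const assms[OF that]] by simp
  qed simp_all
  then have "closed (\<Inter>p\<in>I. {x. E \<le> ereal (f p x)})"
    by (auto intro: closed_INT)
  moreover have "{x. E \<le> (INF p\<in>I. ereal (f p x))} = (\<Inter>p\<in>I. {x. E \<le> ereal (f p x)})"
    by (auto simp: le_INF_iff)
  ultimately show ?thesis
    by simp
qed

lemma continuous_on_Max_image:
  fixes f :: "'i \<Rightarrow> 'a::topological_space \<Rightarrow> 'b::linorder_topology"
  assumes "finite K" and "\<And>k. k \<in> K \<Longrightarrow> continuous_on S (f k)"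
  shows "continuous_on S (\<lambda>x. Max ((\<lambda>k. f k x) ` K))"
proof (cases "K = {}")
  case False
  show ?thesis
    using assms(1) False assms(2)
  proof (induction K rule: finite_ne_induct)
    case (insert k K)
    then have "continuous_on S (\<lambda>x. max (f k x) (Max ((\<lambda>k. f k x) ` K)))"
      by (intro continuous_on_max) auto
    with insert show ?case by (simp add: Max_insert)
  qed simp
qed simp

lemma sets_PiM_le_INF_sample_Max_Lfun:
  fixes K :: "nat set" and E :: ereal
  assumes "\<forall>y. \<bar>conj_fun g y\<bar> \<noteq> \<infinity>" and "\<forall>x. g x \<noteq> -\<infinity>"
    and "finite K" and "sets M = sets borel"
  shows "{xs \<in> space (PiM I (\<lambda>_. M)). E
    \<le> (INF p \<in> UNIV \<times> {0<..}.
          ereal (Max ((\<lambda>k. Lfun g \<beta> (xs k) (fst p) (snd p)) ` K) * a + v (fst p) (snd p) * b))}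
    \<in> sets (PiM I (\<lambda>_. M))"
proof (intro sets_PiM_Collect_closed closed_Collect_le_INF_ereal assms(4))
  fix p :: "real \<times> real"
  assume "p \<in> UNIV \<times> {0<..}"
  then have "continuous_on UNIV (\<lambda>x. Lfun g \<beta> x (fst p) (snd p))"
    using assms(1,2) by (intro continuous_on_Lfun) auto
  then show "continuous_on UNIV (\<lambda>xs. Max ((\<lambda>k. Lfun g \<beta> (xs k) (fst p) (snd p)) ` K) * a
      + v (fst p) (snd p) * b)"
    using assms(3) by (intro continuous_intros continuous_on_Max_image
        continuous_on_compose2[OF _ continuous_on_product_coordinates subset_UNIV])
qed

lemma entropic_risk_le_INF_sample_Max:
  fixes xs :: "nat \<Rightarrow> real" and k N :: nat
  assumes "prob_space P" and "X \<in> borel_measurable P" and "AE w in P. X w \<le> ell"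
    and "closed_convex_fun g" and "\<forall>y. \<bar>conj_fun g y\<bar> \<noteq> \<infinity>"
    and u_b: "\<forall>\<mu>. \<forall>t>0. AE w in P. Lfun g \<beta> (X w) \<mu> t \<le> u_b \<mu> t"
    and "\<epsilon> \<le> 1" and "k < N" and "1 - \<epsilon> \<le> measure P {w \<in> space P. X w \<le> xs k}"
  shows "entropic_risk g \<beta> P X
    \<le> (INF p \<in> UNIV \<times> {0<..}.
          ereal (Max ((\<lambda>k. Lfun g \<beta> (xs k) (fst p) (snd p)) ` {..<N}) * (1 - \<epsilon>)
                 + u_b (fst p) (snd p) * \<epsilon>))"
proof (rule INF_greatest)
  fix p :: "real \<times> real"
  assume "p \<in> UNIV \<times> {0<..}"
  then obtain \<mu> t where p: "p = (\<mu>, t)" and t: "0 < t"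
    by auto
  let ?Max = "Max ((\<lambda>k. Lfun g \<beta> (xs k) \<mu> t) ` {..<N})"
  have "entropic_risk g \<beta> P X \<le> ereal (Lfun g \<beta> (xs k) \<mu> t * (1 - \<epsilon>) + u_b \<mu> t * \<epsilon>)"
    using u_b t by (intro entropic_risk_le_Lfun_quantile[OF assms(1-5) t _ assms(7,9)]) auto
  also have "\<dots> \<le> ereal (?Max * (1 - \<epsilon>) + u_b \<mu> t * \<epsilon>)"
  proof -
    have "Lfun g \<beta> (xs k) \<mu> t \<le> ?Max"
      using assms(8) by (intro Max_ge) auto
    then show ?thesis
      using assms(7) by (simp add: mult_right_mono)
  qed
  finally show "entropic_risk g \<beta> P X
    \<le> ereal (Max ((\<lambda>k. Lfun g \<beta> (xs k) (fst p) (snd p)) ` {..<N}) * (1 - \<epsilon>)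
             + u_b (fst p) (snd p) * \<epsilon>)"
    by (simp add: p)
qed

theorem theorem6:
  fixes P :: "'a measure" and X :: "'a \<Rightarrow> real" and g :: "real \<Rightarrow> ereal"
    and \<beta> ell \<epsilon> :: real and u_b :: "real \<Rightarrow> real \<Rightarrow> real" and N :: nat
  assumes "prob_space P"
    and "X \<in> borel_measurable P"
    and "AE x in distr P borel X. x \<le> ell"
    and "closed_convex_fun g" and "g 1 = 0"
    and "\<beta> \<ge> 0"
    and "\<forall>y. \<bar>conj_fun g y\<bar> \<noteq> \<infinity>"
    and "\<forall>\<mu>. \<forall>t>0. AE x in distr P borel X. Lfun g \<beta> x \<mu> t \<le> u_b \<mu> t"
    and "0 \<le> \<epsilon>" and "\<epsilon> \<le> 1"
  shows "measure (PiM {..<N} (\<lambda>_. distr P borel X))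
           {xs \<in> space (PiM {..<N} (\<lambda>_. distr P borel X)).
              entropic_risk g \<beta> P X
                \<le> (INF p \<in> UNIV \<times> {0<..}.
                     ereal (Max ((\<lambda>k. Lfun g \<beta> (xs k) (fst p) (snd p)) ` {..<N}) * (1 - \<epsilon>)
                            + u_b (fst p) (snd p) * \<epsilon>))}
         \<ge> 1 - (1 - \<epsilon>) ^ N"
proof -
  interpret P: prob_space P by fact
  define \<pi> where "\<pi> = distr P borel X"
  have \<pi>: "real_distribution \<pi>"
    unfolding \<pi>_def using assms(2) by (intro P.real_distribution_distr) simp
  let ?M = "PiM {..<N} (\<lambda>_. \<pi>)"
  interpret M: prob_space ?M
    by (intro prob_space_PiM real_distribution.axioms(1)[OF \<pi>])
  let ?S = "{xs \<in> space ?M. entropic_risk g \<beta> P X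
    \<le> (INF p \<in> UNIV \<times> {0<..}.
          ereal (Max ((\<lambda>k. Lfun g \<beta> (xs k) (fst p) (snd p)) ` {..<N}) * (1 - \<epsilon>)
                 + u_b (fst p) (snd p) * \<epsilon>))}"
  have cdf: "cdf \<pi> x = measure P {w \<in> space P. X w \<le> x}" for x
    unfolding cdf_def2 \<pi>_def using assms(2)
    by (subst measure_distr) (auto intro!: arg_cong[where f="measure P"])
  have u_b: "\<forall>\<mu>. \<forall>t>0. AE w in P. Lfun g \<beta> (X w) \<mu> t \<le> u_b \<mu> t"
    using assms(8) by (auto intro: AE_distrD[OF assms(2)])
  have "{xs \<in> space ?M. \<exists>k<N. 1 - \<epsilon> \<le> cdf \<pi> (xs k)} \<subseteq> ?S"
    using entropic_risk_le_INF_sample_Max[OF assms(1,2) AE_distrD[OF assms(2,3)] assms(4,7) u_b assms(10)]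
    by (auto simp: cdf)
  moreover have "?S \<in> sets ?M"
    using assms(4,7)
    by (intro sets_PiM_le_INF_sample_Max_Lfun) (auto simp: closed_convex_fun_def \<pi>_def)
  ultimately have "measure ?M {xs \<in> space ?M. \<exists>k<N. 1 - \<epsilon> \<le> cdf \<pi> (xs k)} \<le> measure ?M ?S"
    by (rule M.finite_measure_mono)
  with prob_exists_sample_cdf_ge[OF \<pi>, of "1 - \<epsilon>" N] assms(10) show ?thesis
    unfolding \<pi>_def by simp
qed

end
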